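(* Let $N<M$ be natural numbers. Suppose $\emptyset\neq A_1\subseteq{}^N2$, $\emptyset\neq A_2\subseteq{}^{[N,M)}2$ and $A\subseteq{}^M2$ satisfy $\|A_1\|_4^N>1$, $\|A_2\|_4^{[N,M)}>1$ and $A=\{f\cup g: f\in A_1,\ g\in A_2\}$. Then \[\|A\|_4^M\geq\min\{\|A_1\|_4^N,\|A_2\|_4^{[N,M)}\}.\]
   Context: $N=\{0,\ldots,N-1\}$, $M=\{0,\ldots,M-1\}$, $[N,M)=\{N,\ldots,M-1\}$. For a finite index set $I$, ${}^I2$ is the set of all functions $I\to\{0,1\}$ and ${}^{\underline I}2$ the set of partial functions $\sigma$ with $\mathrm{dom}(\sigma)\subseteq I$ and values in $\{0,1\}$ (empty function included); for $\sigma\in{}^{\underline I}2$, $[\sigma]=\{f\in{}^I2:\sigma\subseteq f\}$. For $A\subseteq{}^I2$, $\Delta_I(A)=\{\sigma\in{}^{\underline I}2:[\sigma]\cap A=\emptyset\text{ and }[\rho]\cap A\neq\emptyset\text{ for all }\rho\subsetneq\sigma\}$. For $\delta_1,\delta_2\subseteq{}^{\underline I}2$, $\delta_1\preceq\delta_2$ means every $\sigma\in\delta_1$ has some $\rho\in\delta_2$ with $\rho\subseteq\sigma$. For $\delta\subseteq{}^{\underline I}2$, $\mathrm{hn}(\delta)$ is the maximum of $k+1$ over those natural numbers $k<|I|$ such that for every $\delta'\subseteq\delta$ there is $\delta''\subseteq\delta'$ whose elements have pairwise disjoint domains and $|\bigcup_{\sigma\in\delta''}\mathrm{dom}(\sigma)|\geq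 k|\delta'|$; $\mathrm{HN}(\delta)=\max\{\mathrm{hn}(\delta'):\delta'\subseteq{}^{\underline I}2,\ \delta\preceq\delta'\}$; and $\|A\|_4^I=\mathrm{HN}(\Delta_I(A))$ for $A\subseteq{}^I2$. *)

theory Defs
  imports Main
begin

text \<open>Functions and partial functions with values in {0,1} are represented as
  partial maps nat \<rightharpoonup> bool (False = 0, True = 1).\<close>

definition total_fns :: "nat set \<Rightarrow> (nat \<rightharpoonup> bool) set" where
  "total_fns I = {f. dom f = I}"

definition partial_fns :: "nat set \<Rightarrow> (nat \<rightharpoonup> bool) set" where
  "partial_fns I = {\<sigma>. dom \<sigma> \<subseteq> I}"

definition cyl :: "nat set \<Rightarrow> (nat \<rightharpoonup> bool) \<Rightarrow> (nat \<rightharpoonup> bool) set" where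
  "cyl I \<sigma> = {f \<in> total_fns I. \<sigma> \<subseteq>\<^sub>m f}"

definition Delta :: "nat set \<Rightarrow> (nat \<rightharpoonup> bool) set \<Rightarrow> (nat \<rightharpoonup> bool) set" where
  "Delta I A = {\<sigma> \<in> partial_fns I. cyl I \<sigma> \<inter> A = {} \<and>
                 (\<forall>\<rho>. \<rho> \<subseteq>\<^sub>m \<sigma> \<and> \<rho> \<noteq> \<sigma> \<longrightarrow> cyl I \<rho> \<inter> A \<noteq> {})}"

definition preceq :: "(nat \<rightharpoonup> bool) set \<Rightarrow> (nat \<rightharpoonup> bool) set \<Rightarrow> bool" where
  "preceq \<delta>1 \<delta>2 \<longleftrightarrow> (\<forall>\<sigma>\<in>\<delta>1. \<exists>\<rho>\<in>\<delta>2. \<rho> \<subseteq>\<^sub>m \<sigma>)"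

definition hn_good :: "nat set \<Rightarrow> (nat \<rightharpoonup> bool) set \<Rightarrow> nat \<Rightarrow> bool" where
  "hn_good I \<delta> k \<longleftrightarrow> k < card I \<and>
     (\<forall>\<delta>'. \<delta>' \<subseteq> \<delta> \<longrightarrow> (\<exists>\<delta>''. \<delta>'' \<subseteq> \<delta>' \<and>
        pairwise (\<lambda>\<sigma> \<tau>. dom \<sigma> \<inter> dom \<tau> = {}) \<delta>'' \<and>
        card (\<Union>\<sigma>\<in>\<delta>''. dom \<sigma>) \<ge> k * card \<delta>'))"

text \<open>Maximum of k+1 over good k; convention 0 when there is no good k
  (only possible when I is empty).\<close>
definition hn :: "nat set \<Rightarrow> (nat \<rightharpoonup> bool) set \<Rightarrow> nat" where
  "hn I \<delta> = (let S = {k + 1 | k. hn_good I \<delta> k} in if S = {} then 0 else Max S)"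

definition HN :: "nat set \<Rightarrow> (nat \<rightharpoonup> bool) set \<Rightarrow> nat" where
  "HN I \<delta> = Max {hn I \<delta>' | \<delta>'. \<delta>' \<subseteq> partial_fns I \<and> preceq \<delta> \<delta>'}"

definition norm4 :: "nat set \<Rightarrow> (nat \<rightharpoonup> bool) set \<Rightarrow> nat" where
  "norm4 I A = HN I (Delta I A)"

end

theory Submission
  imports Defs
begin

text \<open>Choose families \<open>\<delta>\<^sub>1 \<succeq> \<Delta>(A\<^sub>1)\<close> and \<open>\<delta>\<^sub>2 \<succeq> \<Delta>(A\<^sub>2)\<close> attaining the two norms.
  If \<open>[\<sigma>]\<close> misses \<open>A\<close>, then the cylinder of \<open>\<sigma>\<close> restricted to \<open>N\<close> misses \<open>A\<^sub>1\<close> or the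
  cylinder of \<open>\<sigma>\<close> restricted to \<open>[N,M)\<close> misses \<open>A\<^sub>2\<close>: otherwise \<open>f \<union> g\<close> with \<open>f\<close>, \<open>g\<close> taken
  from those cylinders lies in \<open>[\<sigma>] \<inter> A\<close>. Hence \<open>\<delta>\<^sub>1 \<union> \<delta>\<^sub>2 \<succeq> \<Delta>(A)\<close>. Any subfamily of
  \<open>\<delta>\<^sub>1 \<union> \<delta>\<^sub>2\<close> splits into a part in \<open>\<delta>\<^sub>1\<close> and a part in \<open>\<delta>\<^sub>2\<close>; disjoint-domain selections
  for the two parts live on disjoint index sets, so their union is a selection for the whole
  family, and every \<open>k\<close> good for both \<open>\<delta>\<^sub>1\<close> and \<open>\<delta>\<^sub>2\<close> is good for \<open>\<delta>\<^sub>1 \<union> \<delta>\<^sub>2\<close>.\<close>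

lemma finite_partial_fns:
  assumes "finite I"
  shows "finite (partial_fns I)"
proof -
  have "partial_fns I = (\<Union>J\<in>Pow I. {m. dom m = J \<and> ran m \<subseteq> UNIV})"
    by (auto simp: partial_fns_def)
  then show ?thesis
    using assms finite_set_of_finite_maps[of _ "UNIV :: bool set"] by (auto dest: finite_subset)
qed

lemma map_le_dom_psubset:
  assumes "\<rho> \<subseteq>\<^sub>m \<sigma>" and "\<rho> \<noteq> \<sigma>"
  shows "dom \<rho> \<subset> dom \<sigma>"
proof -
  have "\<not> dom \<sigma> \<subseteq> dom \<rho>"
  proof
    assume "dom \<sigma> \<subseteq> dom \<rho>"
    then have "\<sigma> \<subseteq>\<^sub>m \<rho>"
      using assms(1) by (force simp: map_le_def)
    then show False
      using assms map_le_antisym by blast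
  qed
  then show ?thesis
    using map_le_implies_dom_le[OF assms(1)] by blast
qed

lemma ex_Delta_map_le:
  assumes "finite I" and "\<sigma> \<in> partial_fns I" and "cyl I \<sigma> \<inter> A = {}"
  shows "\<exists>\<rho>\<in>Delta I A. \<rho> \<subseteq>\<^sub>m \<sigma>"
proof -
  obtain \<rho> where \<rho>: "\<rho> \<subseteq>\<^sub>m \<sigma>" "cyl I \<rho> \<inter> A = {}"
    and least: "\<And>\<tau>. \<tau> \<subseteq>\<^sub>m \<sigma> \<and> cyl I \<tau> \<inter> A = {} \<Longrightarrow> card (dom \<rho>) \<le> card (dom \<tau>)"
    using ex_has_least_nat[of "\<lambda>\<tau>. \<tau> \<subseteq>\<^sub>m \<sigma> \<and> cyl I \<tau> \<inter> A = {}" \<sigma> "\<lambda>\<tau>. card (dom \<tau>)"]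
      assms(3) by auto
  have dom_\<rho>: "dom \<rho> \<subseteq> I"
    using map_le_implies_dom_le[OF \<rho>(1)] assms(2) by (auto simp: partial_fns_def)
  have "cyl I \<tau> \<inter> A \<noteq> {}" if "\<tau> \<subseteq>\<^sub>m \<rho>" and "\<tau> \<noteq> \<rho>" for \<tau>
  proof
    assume "cyl I \<tau> \<inter> A = {}"
    then have "card (dom \<rho>) \<le> card (dom \<tau>)"
      using least map_le_trans[OF that(1) \<rho>(1)] by blast
    moreover have "card (dom \<tau>) < card (dom \<rho>)"
      using psubset_card_mono[OF _ map_le_dom_psubset[OF that]] dom_\<rho> assms(1)
      by (meson finite_subset)
    ultimately show False
      by simp
  qed
  then have "\<rho> \<in> Delta I A"
    using dom_\<rho> \<rho>(2) by (simp add: Delta_def partial_fns_def)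
  then show ?thesis
    using \<rho>(1) by blast
qed

lemma preceq_refl: "preceq \<delta> \<delta>"
  unfolding preceq_def using map_le_refl by blast

lemma preceq_trans: "preceq \<delta>\<^sub>1 \<delta>\<^sub>2 \<Longrightarrow> preceq \<delta>\<^sub>2 \<delta>\<^sub>3 \<Longrightarrow> preceq \<delta>\<^sub>1 \<delta>\<^sub>3"
  unfolding preceq_def by (meson map_le_trans)

lemma preceq_Un: "preceq \<delta>\<^sub>1 \<delta>\<^sub>1' \<Longrightarrow> preceq \<delta>\<^sub>2 \<delta>\<^sub>2' \<Longrightarrow> preceq (\<delta>\<^sub>1 \<union> \<delta>\<^sub>2) (\<delta>\<^sub>1' \<union> \<delta>\<^sub>2')"
  unfolding preceq_def by blast

lemma finite_HN_candidates:
  assumes "finite I"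
  shows "finite {hn I \<delta>' | \<delta>'. \<delta>' \<subseteq> partial_fns I \<and> preceq \<delta> \<delta>'}"
proof -
  have "finite {\<delta>'. \<delta>' \<subseteq> partial_fns I \<and> preceq \<delta> \<delta>'}"
    using finite_partial_fns[OF assms] by (auto intro: finite_subset[of _ "Pow (partial_fns I)"])
  then show ?thesis
    by (simp add: setcompr_eq_image)
qed

lemma hn_le_HN:
  assumes "finite I" and "\<delta>' \<subseteq> partial_fns I" and "preceq \<delta> \<delta>'"
  shows "hn I \<delta>' \<le> HN I \<delta>"
  unfolding HN_def using assms by (intro Max_ge finite_HN_candidates) blast+

lemma HN_attained:
  assumes "finite I" and "\<delta> \<subseteq> partial_fns I"
  obtains \<delta>' where "\<delta>' \<subseteq> partial_fns I" and "preceq \<delta> \<delta>'" and "HN I \<delta> = hn I \<delta>'"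
proof -
  have "HN I \<delta> \<in> {hn I \<delta>' | \<delta>'. \<delta>' \<subseteq> partial_fns I \<and> preceq \<delta> \<delta>'}"
    unfolding HN_def using assms preceq_refl by (intro Max_in finite_HN_candidates) blast+
  then show ?thesis
    using that by blast
qed

lemma hn_good_le:
  assumes "hn_good I \<delta> k" and "j \<le> k"
  shows "hn_good I \<delta> j"
proof -
  have "j * card \<delta>' \<le> k * card \<delta>'" for \<delta>' :: "(nat \<rightharpoonup> bool) set"
    using assms(2) by simp
  then show ?thesis
    using assms unfolding hn_good_def by (meson le_less_trans order_trans)
qed

lemma hn_good_iff: "hn_good I \<delta> k \<longleftrightarrow> k < hn I \<delta>"
proof -
  let ?S = "{k + 1 | k. hn_good I \<delta> k}"
  have "?S \<subseteq> {..card I}"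
    unfolding hn_good_def by auto
  then have finite_S: "finite ?S"
    by (rule finite_subset) simp
  show ?thesis
  proof
    assume "hn_good I \<delta> k"
    then show "k < hn I \<delta>"
      unfolding hn_def Let_def using Max_ge[OF finite_S] by force
  next
    assume less: "k < hn I \<delta>"
    then have "?S \<noteq> {}"
      unfolding hn_def Let_def by (auto split: if_split_asm)
    then have "hn I \<delta> \<in> ?S"
      unfolding hn_def Let_def using Max_in[OF finite_S] by simp
    then obtain m where "hn_good I \<delta> m" and "hn I \<delta> = m + 1"
      by blast
    then show "hn_good I \<delta> k"
      using less hn_good_le by simp
  qed
qed

lemma hn_good_Un:
  assumes good\<^sub>1: "hn_good I\<^sub>1 \<delta>\<^sub>1 k" and good\<^sub>2: "hn_good I\<^sub>2 \<delta>\<^sub>2 k"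
    and "\<delta>\<^sub>1 \<subseteq> partial_fns I\<^sub>1" and "\<delta>\<^sub>2 \<subseteq> partial_fns I\<^sub>2"
    and "finite I\<^sub>1" and "finite I\<^sub>2" and "I\<^sub>1 \<inter> I\<^sub>2 = {}"
  shows "hn_good (I\<^sub>1 \<union> I\<^sub>2) (\<delta>\<^sub>1 \<union> \<delta>\<^sub>2) k"
  unfolding hn_good_def
proof (intro conjI allI impI)
  show "k < card (I\<^sub>1 \<union> I\<^sub>2)"
    using good\<^sub>1 card_mono[of "I\<^sub>1 \<union> I\<^sub>2" I\<^sub>1] assms(5,6) by (simp add: hn_good_def)
next
  fix \<delta>' assume \<delta>': "\<delta>' \<subseteq> \<delta>\<^sub>1 \<union> \<delta>\<^sub>2"
  let ?disj = "pairwise (\<lambda>\<sigma> \<tau>. dom \<sigma> \<inter> dom \<tau> = {})"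
  obtain E\<^sub>1 where E\<^sub>1: "E\<^sub>1 \<subseteq> \<delta>' \<inter> \<delta>\<^sub>1" "?disj E\<^sub>1" "k * card (\<delta>' \<inter> \<delta>\<^sub>1) \<le> card (\<Union>\<sigma>\<in>E\<^sub>1. dom \<sigma>)"
    using good\<^sub>1 unfolding hn_good_def by (meson inf_le2)
  obtain E\<^sub>2 where E\<^sub>2: "E\<^sub>2 \<subseteq> \<delta>' - \<delta>\<^sub>1" "?disj E\<^sub>2" "k * card (\<delta>' - \<delta>\<^sub>1) \<le> card (\<Union>\<sigma>\<in>E\<^sub>2. dom \<sigma>)"
    using good\<^sub>2 \<delta>' unfolding hn_good_def by (metis Diff_subset_conv)
  have U\<^sub>1: "(\<Union>\<sigma>\<in>E\<^sub>1. dom \<sigma>) \<subseteq> I\<^sub>1" and U\<^sub>2: "(\<Union>\<sigma>\<in>E\<^sub>2. dom \<sigma>) \<subseteq> I\<^sub>2"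
    using E\<^sub>1(1) E\<^sub>2(1) \<delta>' assms(3,4) unfolding partial_fns_def by blast+
  have "finite \<delta>'"
    using \<delta>' assms(3-6) finite_partial_fns by (meson finite_UnI finite_subset)
  then have "card \<delta>' = card (\<delta>' \<inter> \<delta>\<^sub>1) + card (\<delta>' - \<delta>\<^sub>1)"
    by (metis Int_Diff_Un Int_Diff_disjoint card_Un_disjoint finite_Diff finite_Int)
  also have "k * \<dots> \<le> card (\<Union>\<sigma>\<in>E\<^sub>1. dom \<sigma>) + card (\<Union>\<sigma>\<in>E\<^sub>2. dom \<sigma>)"
    using E\<^sub>1(3) E\<^sub>2(3) by (simp add: add_mult_distrib2)
  also have "\<dots> = card ((\<Union>\<sigma>\<in>E\<^sub>1. dom \<sigma>) \<union> (\<Union>\<sigma>\<in>E\<^sub>2. dom \<sigma>))"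
    using U\<^sub>1 U\<^sub>2 assms(5-7) by (intro card_Un_disjoint[symmetric]) (auto dest: finite_subset)
  also have "\<dots> = card (\<Union>\<sigma>\<in>E\<^sub>1 \<union> E\<^sub>2. dom \<sigma>)"
    by simp
  finally have "k * card \<delta>' \<le> card (\<Union>\<sigma>\<in>E\<^sub>1 \<union> E\<^sub>2. dom \<sigma>)" .
  moreover have "?disj (E\<^sub>1 \<union> E\<^sub>2)"
    using E\<^sub>1(2) E\<^sub>2(2) U\<^sub>1 U\<^sub>2 assms(7) unfolding pairwise_def by blast
  moreover have "E\<^sub>1 \<union> E\<^sub>2 \<subseteq> \<delta>'"
    using E\<^sub>1(1) E\<^sub>2(1) by blast
  ultimately show "\<exists>\<delta>''\<subseteq>\<delta>'. ?disj \<delta>'' \<and> k * card \<delta>' \<le> card (\<Union>\<sigma>\<in>\<delta>''. dom \<sigma>)"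
    by blast
qed

lemma map_add_in_cyl:
  assumes "f \<in> cyl I\<^sub>1 (\<sigma> |` I\<^sub>1)" and "g \<in> cyl I\<^sub>2 (\<sigma> |` I\<^sub>2)" and "dom \<sigma> \<subseteq> I\<^sub>1 \<union> I\<^sub>2"
  shows "f ++ g \<in> cyl (I\<^sub>1 \<union> I\<^sub>2) \<sigma>"
proof -
  have f: "dom f = I\<^sub>1" "\<sigma> |` I\<^sub>1 \<subseteq>\<^sub>m f" and g: "dom g = I\<^sub>2" "\<sigma> |` I\<^sub>2 \<subseteq>\<^sub>m g"
    using assms(1,2) by (simp_all add: cyl_def total_fns_def)
  have "\<sigma> x = (f ++ g) x" if "x \<in> dom \<sigma>" for x
  proof (cases "x \<in> I\<^sub>2")
    case True
    then show ?thesis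
      using that g(2) by (force simp: map_le_def map_add_def)
  next
    case False
    then show ?thesis
      using that assms(3) f(2) g(1) by (force simp: map_le_def map_add_def)
  qed
  then show ?thesis
    using f(1) g(1) by (auto simp: cyl_def total_fns_def map_le_def)
qed

lemma Delta_product_preceq:
  assumes "finite I\<^sub>1" and "finite I\<^sub>2"
  shows "preceq (Delta (I\<^sub>1 \<union> I\<^sub>2) {f ++ g | f g. f \<in> A\<^sub>1 \<and> g \<in> A\<^sub>2}) (Delta I\<^sub>1 A\<^sub>1 \<union> Delta I\<^sub>2 A\<^sub>2)"
  unfolding preceq_def
proof
  fix \<sigma> assume "\<sigma> \<in> Delta (I\<^sub>1 \<union> I\<^sub>2) {f ++ g | f g. f \<in> A\<^sub>1 \<and> g \<in> A\<^sub>2}"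
  then have dom_\<sigma>: "dom \<sigma> \<subseteq> I\<^sub>1 \<union> I\<^sub>2"
    and misses: "cyl (I\<^sub>1 \<union> I\<^sub>2) \<sigma> \<inter> {f ++ g | f g. f \<in> A\<^sub>1 \<and> g \<in> A\<^sub>2} = {}"
    by (simp_all add: Delta_def partial_fns_def)
  have "cyl I\<^sub>1 (\<sigma> |` I\<^sub>1) \<inter> A\<^sub>1 = {} \<or> cyl I\<^sub>2 (\<sigma> |` I\<^sub>2) \<inter> A\<^sub>2 = {}"
    using map_add_in_cyl[OF _ _ dom_\<sigma>] misses by blast
  moreover have "\<sigma> |` I \<in> partial_fns I" and "\<sigma> |` I \<subseteq>\<^sub>m \<sigma>" for I
    by (auto simp: partial_fns_def map_le_def)
  ultimately show "\<exists>\<rho>\<in>Delta I\<^sub>1 A\<^sub>1 \<union> Delta I\<^sub>2 A\<^sub>2. \<rho> \<subseteq>\<^sub>m \<sigma>"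
    using ex_Delta_map_le assms by (meson UnI1 UnI2 map_le_trans)
qed

lemma norm4_product_ge:
  assumes "finite I\<^sub>1" and "finite I\<^sub>2" and "I\<^sub>1 \<inter> I\<^sub>2 = {}"
  shows "min (norm4 I\<^sub>1 A\<^sub>1) (norm4 I\<^sub>2 A\<^sub>2) \<le> norm4 (I\<^sub>1 \<union> I\<^sub>2) {f ++ g | f g. f \<in> A\<^sub>1 \<and> g \<in> A\<^sub>2}"
    (is "?m \<le> norm4 _ ?A")
proof (cases "?m = 0")
  case False
  have "Delta I A \<subseteq> partial_fns I" for I A
    by (auto simp: Delta_def)
  then obtain \<delta>\<^sub>1 \<delta>\<^sub>2 where
    \<delta>\<^sub>1: "\<delta>\<^sub>1 \<subseteq> partial_fns I\<^sub>1" "preceq (Delta I\<^sub>1 A\<^sub>1) \<delta>\<^sub>1" "norm4 I\<^sub>1 A\<^sub>1 = hn I\<^sub>1 \<delta>\<^sub>1" and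
    \<delta>\<^sub>2: "\<delta>\<^sub>2 \<subseteq> partial_fns I\<^sub>2" "preceq (Delta I\<^sub>2 A\<^sub>2) \<delta>\<^sub>2" "norm4 I\<^sub>2 A\<^sub>2 = hn I\<^sub>2 \<delta>\<^sub>2"
    using HN_attained assms(1,2) unfolding norm4_def by metis
  have "?m - 1 < hn I\<^sub>1 \<delta>\<^sub>1" and "?m - 1 < hn I\<^sub>2 \<delta>\<^sub>2"
    using False unfolding \<delta>\<^sub>1(3) \<delta>\<^sub>2(3) by (auto simp: min_def)
  then have "hn_good (I\<^sub>1 \<union> I\<^sub>2) (\<delta>\<^sub>1 \<union> \<delta>\<^sub>2) (?m - 1)"
    using \<delta>\<^sub>1(1) \<delta>\<^sub>2(1) assms by (intro hn_good_Un) (simp_all add: hn_good_iff)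
  then have "?m \<le> hn (I\<^sub>1 \<union> I\<^sub>2) (\<delta>\<^sub>1 \<union> \<delta>\<^sub>2)"
    by (simp add: hn_good_iff)
  also have "\<dots> \<le> norm4 (I\<^sub>1 \<union> I\<^sub>2) ?A"
    unfolding norm4_def using \<delta>\<^sub>1 \<delta>\<^sub>2 assms(1,2)
    by (intro hn_le_HN preceq_trans[OF Delta_product_preceq preceq_Un])
      (auto simp: partial_fns_def)
  finally show ?thesis .
qed simp

theorem proposition6p28:
  fixes N M :: nat and A1 A2 A :: "(nat \<rightharpoonup> bool) set"
  assumes "N < M"
    and "A1 \<noteq> {}" and "A1 \<subseteq> total_fns {..<N}"
    and "A2 \<noteq> {}" and "A2 \<subseteq> total_fns {N..<M}"
    and "A \<subseteq> total_fns {..<M}"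
    and "norm4 {..<N} A1 > 1"
    and "norm4 {N..<M} A2 > 1"
    and "A = {f ++ g | f g. f \<in> A1 \<and> g \<in> A2}"
  shows "norm4 {..<M} A \<ge> min (norm4 {..<N} A1) (norm4 {N..<M} A2)"
proof -
  \<comment> \<open>Only the disjointness of the two index sets is needed; the hypotheses on
    nonemptiness, totality and the norms exceeding 1 are not.\<close>
  have "min (norm4 {..<N} A1) (norm4 {N..<M} A2) \<le> norm4 ({..<N} \<union> {N..<M}) A"
    unfolding assms(9) by (rule norm4_product_ge) auto
  also have "{..<N} \<union> {N..<M} = {..<M}"
    using assms(1) by auto
  finally show ?thesis .
qed

end
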